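(* Let $J\subsetneq I$ be nonzero square free monomial ideals of $S=K[x_1,\ldots,x_n]$, where $I$ is generated by $r>0$ variables and $J$ is generated by square free monomials of degrees $\geq 2$. Let $s=\rho_2(I)-\rho_2(J)$ be the number of square free monomials of degree $2$ in $I\setminus J$. If $r>s$, then $\operatorname{depth}_S I/J=1$.
   Context: $S=K[x_1,\ldots,x_n]$ is the polynomial ring over a field $K$; for a monomial ideal $L$, $\rho_k(L)$ denotes the number of square free monomials of degree $k$ belonging to $L$; depth is taken over $S$. *)

theory Defs
  imports Main "HOL-Library.Poly_Mapping"
begin

(* Polynomials over a field 'a in variables indexed by nat: a monomial (power product)
is a finitely supported map nat \<Rightarrow>\<^sub>0 nat (exponent vector), a polynomial is a finitely
supported map from monomials to coefficients. The ring S = K[x_0,...,x_(n-1)] is the set of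
polynomials all of whose monomials only involve the variables 0,...,n-1. *)

type_synonym 'a mpoly = "(nat \<Rightarrow>\<^sub>0 nat) \<Rightarrow>\<^sub>0 'a"

definition polyring :: "nat \<Rightarrow> ('a::field) mpoly set" where
  "polyring n = {p :: 'a mpoly. \<forall>m\<in>Poly_Mapping.keys p. Poly_Mapping.keys m \<subseteq> {..<n}}"

definition mon :: "(nat \<Rightarrow>\<^sub>0 nat) \<Rightarrow> ('a::field) mpoly" where
  "mon a = Poly_Mapping.single a 1"

definition var :: "nat \<Rightarrow> ('a::field) mpoly" where
  "var i = mon (Poly_Mapping.single i 1)"

definition mdeg :: "(nat \<Rightarrow>\<^sub>0 nat) \<Rightarrow> nat" where
  "mdeg a = (\<Sum>i\<in>Poly_Mapping.keys a. Poly_Mapping.lookup a i)"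

definition sqfree_mon :: "nat \<Rightarrow> (nat \<Rightarrow>\<^sub>0 nat) \<Rightarrow> bool" where
  "sqfree_mon n a \<longleftrightarrow> Poly_Mapping.keys a \<subseteq> {..<n} \<and> (\<forall>i. Poly_Mapping.lookup a i \<le> 1)"

definition is_ideal :: "nat \<Rightarrow> ('a::field) mpoly set \<Rightarrow> bool" where
  "is_ideal n L \<longleftrightarrow> L \<subseteq> polyring n \<and> 0 \<in> L \<and> (\<forall>p\<in>L. \<forall>q\<in>L. p + q \<in> L)
     \<and> (\<forall>p\<in>L. \<forall>q\<in>polyring n. q * p \<in> L)"

definition ideal_gen :: "nat \<Rightarrow> ('a::field) mpoly set \<Rightarrow> 'a mpoly set" where
  "ideal_gen n G = \<Inter>{L. is_ideal n L \<and> G \<subseteq> L}"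

definition sqfree_monomial_ideal :: "nat \<Rightarrow> ('a::field) mpoly set \<Rightarrow> bool" where
  "sqfree_monomial_ideal n L \<longleftrightarrow> (\<exists>A. (\<forall>a\<in>A. sqfree_mon n a) \<and> L = ideal_gen n (mon ` A))"

definition rho :: "nat \<Rightarrow> nat \<Rightarrow> ('a::field) mpoly set \<Rightarrow> nat" where
  "rho n k L = card {a. sqfree_mon n a \<and> mdeg a = k \<and> mon a \<in> L}"

definition max_ideal :: "nat \<Rightarrow> ('a::field) mpoly set" where
  "max_ideal n = {p \<in> polyring n. Poly_Mapping.lookup p 0 = 0}"

(* For S-modules J \<subseteq> I \<subseteq> S, the preimage in I of (f_1,...,f_k)(I/J), i.e. J + (f_1,...,f_k) I. *)
definition sub_seq :: "('a::field) mpoly set \<Rightarrow> 'a mpoly set \<Rightarrow> 'a mpoly list \<Rightarrow> 'a mpoly set" where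
  "sub_seq I J fs = {j + (\<Sum>i<length fs. fs ! i * u i) | j u. j \<in> J \<and> (\<forall>i. u i \<in> I)}"

(* f_1,...,f_k in m is an (I/J)-regular sequence: each f_(i+1) is a non-zero-divisor on
(I/J)/(f_1..f_i)(I/J), and (I/J)/(f_1..f_k)(I/J) \<noteq> 0. *)
definition regular_seq :: "nat \<Rightarrow> ('a::field) mpoly set \<Rightarrow> 'a mpoly set \<Rightarrow> 'a mpoly list \<Rightarrow> bool" where
  "regular_seq n I J fs \<longleftrightarrow> set fs \<subseteq> max_ideal n
     \<and> (\<forall>i<length fs. \<forall>u\<in>I. fs ! i * u \<in> sub_seq I J (take i fs) \<longrightarrow> u \<in> sub_seq I J (take i fs))
     \<and> sub_seq I J fs \<noteq> I"

definition depth_quot :: "nat \<Rightarrow> ('a::field) mpoly set \<Rightarrow> 'a mpoly set \<Rightarrow> nat" where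
  "depth_quot n I J = (GREATEST k. \<exists>fs. length fs = k \<and> regular_seq n I J fs)"

end

theory Submission
  imports Defs
begin

text \<open>
  Write I = (x_i : i \<in> V) and J for the ideal generated by the square free monomials A of
  degree at least 2. Both are monomial ideals: a polynomial lies in one of them iff each of its
  monomials is divisible by a generator, and the whole argument takes place on monomials.

  depth I/J \<ge> 1: the sum f of all variables is I/J-regular. If f u lies in J but u does not,
  take the lexicographically largest monomial m of u outside J and the smallest variable x_i of
  m. The monomial m x_i occurs in f u with the coefficient of m in u, so it lies in J, and as J
  is square free, m itself would lie in J. Moreover x_i \<notin> J + f I, since J has no linear
  generators.

  depth I/J \<le> 1: as r > s, a counting argument yields a nonempty C \<subseteq> V that J cuts off,
  i.e. x_i x_k \<in> J for all i \<in> C and k \<notin> C. Every product of a polynomial whose monomials meet C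
  with one whose monomials are not supported in C lies in J. Hence for f1 regular and any f2,
  the C-supported part u of f1 satisfies f2 u \<in> J + f1 I but u \<notin> J + f1 I, so no regular
  sequence has length 2.
\<close>

abbreviation unit_exp :: "nat \<Rightarrow> (nat \<Rightarrow>\<^sub>0 nat)" where
  "unit_exp i \<equiv> Poly_Mapping.single i 1"

definition mdvd :: "(nat \<Rightarrow>\<^sub>0 nat) \<Rightarrow> (nat \<Rightarrow>\<^sub>0 nat) \<Rightarrow> bool" where
  "mdvd b m \<longleftrightarrow> (\<forall>j. Poly_Mapping.lookup b j \<le> Poly_Mapping.lookup m j)"

lemma mdvd_refl [simp]: "mdvd m m"
  by (simp add: mdvd_def)

lemma mdvd_trans: "mdvd a b \<Longrightarrow> mdvd b c \<Longrightarrow> mdvd a c"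
  unfolding mdvd_def using order_trans by blast

lemma mdvd_add_left: "mdvd a b \<Longrightarrow> mdvd a (c + b)"
  unfolding mdvd_def by (simp add: lookup_add trans_le_add2)

lemma mdvd_decompose: "mdvd b m \<Longrightarrow> m = (m - b) + b"
  by (auto simp: mdvd_def poly_mapping_eq_iff lookup_add lookup_minus fun_eq_iff)

lemma mdvd_unit_exp: "mdvd (unit_exp i) m \<longleftrightarrow> i \<in> Poly_Mapping.keys m"
  unfolding mdvd_def by (auto simp: lookup_single in_keys_iff when_def)

lemma mdvd_edge:
  assumes "i \<in> Poly_Mapping.keys a" "k \<in> Poly_Mapping.keys c" "i \<noteq> k"
  shows "mdvd (unit_exp i + unit_exp k) (a + c)"
  unfolding mdvd_def
proof
  fix j
  show "Poly_Mapping.lookup (unit_exp i + unit_exp k) j \<le> Poly_Mapping.lookup (a + c) j"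
    using assms by (cases "j = i"; cases "j = k") (auto simp: lookup_add lookup_single in_keys_iff when_def)
qed

lemma keys_add_exp:
  "Poly_Mapping.keys (a + b :: nat \<Rightarrow>\<^sub>0 nat) = Poly_Mapping.keys a \<union> Poly_Mapping.keys b"
  by (auto simp: in_keys_iff lookup_add)

lemma unit_exp_not_sum:
  assumes "a \<noteq> 0" "c \<noteq> 0"
  shows "a + c \<noteq> unit_exp i"
proof
  assume sum: "a + c = unit_exp i"
  have "Poly_Mapping.keys a \<subseteq> {i}" "Poly_Mapping.keys c \<subseteq> {i}"
    using keys_add_exp[of a c] by (simp_all add: sum)
  with assms have "i \<in> Poly_Mapping.keys a \<and> i \<in> Poly_Mapping.keys c"
    by (auto dest!: subset_singletonD)
  then have "Poly_Mapping.lookup a i + Poly_Mapping.lookup c i \<ge> 2"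
    by (simp add: in_keys_iff)
  moreover have "Poly_Mapping.lookup a i + Poly_Mapping.lookup c i = 1"
    using sum by (metis lookup_add lookup_single_eq)
  ultimately show False by simp
qed

lemma polyring_zero: "0 \<in> polyring n"
  unfolding polyring_def by simp

lemma polyring_add: "p \<in> polyring n \<Longrightarrow> q \<in> polyring n \<Longrightarrow> p + q \<in> polyring n"
  unfolding polyring_def using keys_add[of p q] by blast

lemma polyring_diff: "p \<in> polyring n \<Longrightarrow> q \<in> polyring n \<Longrightarrow> p - q \<in> polyring n"
  unfolding polyring_def using keys_diff[of p q] by blast

lemma polyring_mult:
  assumes p: "p \<in> polyring n" and q: "q \<in> polyring n"
  shows "p * q \<in> polyring n"
  unfolding polyring_def mem_Collect_eq
proof
  fix m assume "m \<in> Poly_Mapping.keys (p * q)"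
  then obtain a b where "m = a + b" "a \<in> Poly_Mapping.keys p" "b \<in> Poly_Mapping.keys q"
    using keys_mult[of p q] by blast
  then show "Poly_Mapping.keys m \<subseteq> {..<n}"
    using p q unfolding polyring_def by (simp add: keys_add_exp)
qed

lemma polyring_single: "Poly_Mapping.keys m \<subseteq> {..<n} \<Longrightarrow> Poly_Mapping.single m c \<in> polyring n"
  unfolding polyring_def by simp

lemma polyring_var: "i < n \<Longrightarrow> var i \<in> polyring n"
  unfolding var_def mon_def by (intro polyring_single) simp

lemma polyring_sum: "(\<And>i. i \<in> X \<Longrightarrow> f i \<in> polyring n) \<Longrightarrow> sum f X \<in> polyring n"
  by (induction X rule: infinite_finite_induct) (auto intro: polyring_add polyring_zero)

section \<open>Monomial ideals\<close>

definition mon_ideal :: "nat \<Rightarrow> (nat \<Rightarrow>\<^sub>0 nat) set \<Rightarrow> ('a::field) mpoly set" where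
  "mon_ideal n B = {p \<in> polyring n. \<forall>m\<in>Poly_Mapping.keys p. \<exists>b\<in>B. mdvd b m}"

lemma mon_ideal_polyring: "p \<in> mon_ideal n B \<Longrightarrow> p \<in> polyring n"
  unfolding mon_ideal_def by blast

lemma mon_ideal_add: "p \<in> mon_ideal n B \<Longrightarrow> q \<in> mon_ideal n B \<Longrightarrow> p + q \<in> mon_ideal n B"
  unfolding mon_ideal_def using keys_add[of p q] polyring_add by blast

lemma mon_ideal_diff: "p \<in> mon_ideal n B \<Longrightarrow> q \<in> mon_ideal n B \<Longrightarrow> p - q \<in> mon_ideal n B"
  unfolding mon_ideal_def using keys_diff[of p q] polyring_diff by blast

lemma mon_ideal_mult:
  assumes p: "p \<in> mon_ideal n B" and q: "q \<in> polyring n"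
  shows "q * p \<in> mon_ideal n B"
proof -
  have "\<exists>b\<in>B. mdvd b m" if m: "m \<in> Poly_Mapping.keys (q * p)" for m
  proof -
    obtain a c where "m = a + c" "c \<in> Poly_Mapping.keys p" using keys_mult[of q p] m by blast
    then show ?thesis using p mdvd_add_left unfolding mon_ideal_def by blast
  qed
  then show ?thesis
    using p q polyring_mult unfolding mon_ideal_def by blast
qed

lemma mon_ideal_is_ideal: "is_ideal n (mon_ideal n B :: 'a::field mpoly set)"
proof -
  have "0 \<in> (mon_ideal n B :: 'a mpoly set)" by (simp add: mon_ideal_def polyring_zero)
  then show ?thesis
    unfolding is_ideal_def using mon_ideal_add mon_ideal_mult mon_ideal_polyring by blast
qed

lemma is_ideal_sum: "is_ideal n L \<Longrightarrow> (\<And>i. i \<in> X \<Longrightarrow> f i \<in> L) \<Longrightarrow> sum f X \<in> L"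
  by (induction X rule: infinite_finite_induct) (auto simp: is_ideal_def)

lemma sum_of_terms: "p = (\<Sum>m\<in>Poly_Mapping.keys p. Poly_Mapping.single m (Poly_Mapping.lookup p m))"
  by (rule poly_mapping_eqI) (simp add: lookup_sum lookup_single when_def in_keys_iff)

text \<open>The ideal generated by monomials is the monomial ideal they span; this turns membership
  in I and J into a condition on single monomials.\<close>
lemma ideal_gen_mon:
  assumes B: "\<forall>b\<in>B. Poly_Mapping.keys b \<subseteq> {..<n}"
  shows "ideal_gen n (mon ` B :: 'a::field mpoly set) = mon_ideal n B"
proof
  have "mon b \<in> (mon_ideal n B :: 'a mpoly set)" if "b \<in> B" for b
    using that B unfolding mon_ideal_def mon_def by (auto intro!: polyring_single bexI[of _ b])
  then have "mon ` B \<subseteq> (mon_ideal n B :: 'a mpoly set)" by blast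
  then show "ideal_gen n (mon ` B) \<subseteq> (mon_ideal n B :: 'a mpoly set)"
    unfolding ideal_gen_def using mon_ideal_is_ideal[of n B] by blast
next
  show "mon_ideal n B \<subseteq> ideal_gen n (mon ` B :: 'a mpoly set)"
    unfolding ideal_gen_def
  proof (intro subsetI InterI, clarify)
    fix p :: "'a mpoly" and L :: "'a mpoly set"
    assume p: "p \<in> mon_ideal n B" and L: "is_ideal n L" "mon ` B \<subseteq> L"
    have "Poly_Mapping.single m (Poly_Mapping.lookup p m) \<in> L" if m: "m \<in> Poly_Mapping.keys p" for m
    proof -
      obtain b where b: "b \<in> B" "mdvd b m" using p m unfolding mon_ideal_def by blast
      have "Poly_Mapping.keys m \<subseteq> {..<n}" using p m unfolding mon_ideal_def polyring_def by blast
      then have "Poly_Mapping.keys (m - b) \<subseteq> {..<n}"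
        using mdvd_decompose[OF b(2)] keys_add_exp by (metis Un_subset_iff)
      then have cofactor: "Poly_Mapping.single (m - b) (Poly_Mapping.lookup p m) \<in> polyring n"
        by (rule polyring_single)
      have "Poly_Mapping.single m (Poly_Mapping.lookup p m)
          = Poly_Mapping.single (m - b) (Poly_Mapping.lookup p m) * mon b"
        unfolding mon_def mult_single using mdvd_decompose[OF b(2)] by simp
      also have "\<dots> \<in> L" using L b cofactor unfolding is_ideal_def by blast
      finally show ?thesis .
    qed
    then show "p \<in> L" using is_ideal_sum[OF L(1)] sum_of_terms[of p] by metis
  qed
qed

lemma mon_ideal_vars_iff:
  "p \<in> mon_ideal n (unit_exp ` V)
     \<longleftrightarrow> p \<in> polyring n \<and> (\<forall>m\<in>Poly_Mapping.keys p. Poly_Mapping.keys m \<inter> V \<noteq> {})"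
  unfolding mon_ideal_def using mdvd_unit_exp by blast

lemma mon_ideal_vars_no_constant: "p \<in> mon_ideal n (unit_exp ` V) \<Longrightarrow> Poly_Mapping.lookup p 0 = 0"
  unfolding mon_ideal_vars_iff by (metis in_keys_iff inf_bot_left keys_zero)

lemma var_in_mon_ideal_vars: "i \<in> V \<Longrightarrow> i < n \<Longrightarrow> var i \<in> mon_ideal n (unit_exp ` V)"
  unfolding mon_ideal_vars_iff using polyring_var by (auto simp: var_def mon_def)

lemma mon_ideal_coeff_var:
  assumes "\<forall>b\<in>B. \<not> mdvd b (unit_exp i)" "p \<in> mon_ideal n B"
  shows "Poly_Mapping.lookup p (unit_exp i) = 0"
  using assms unfolding mon_ideal_def by (auto simp: in_keys_iff)

definition mon_part :: "((nat \<Rightarrow>\<^sub>0 nat) \<Rightarrow> bool) \<Rightarrow> ('a::field) mpoly \<Rightarrow> 'a mpoly" where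
  "mon_part P p = Poly_Mapping.mapp (\<lambda>m c. if P m then c else 0) p"

lemma lookup_mon_part:
  "Poly_Mapping.lookup (mon_part P p) m = (if P m then Poly_Mapping.lookup p m else 0)"
  unfolding mon_part_def by (auto simp: lookup_mapp when_def in_keys_iff)

lemma keys_mon_part: "m \<in> Poly_Mapping.keys (mon_part P p) \<longleftrightarrow> m \<in> Poly_Mapping.keys p \<and> P m"
  by (auto simp: in_keys_iff lookup_mon_part)

lemma keys_mon_part_rest:
  "m \<in> Poly_Mapping.keys (p - mon_part P p) \<longleftrightarrow> m \<in> Poly_Mapping.keys p \<and> \<not> P m"
  by (auto simp: in_keys_iff lookup_mon_part lookup_minus)

lemma polyring_mon_part: "p \<in> polyring n \<Longrightarrow> mon_part P p \<in> polyring n"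
  unfolding polyring_def by (auto simp: keys_mon_part)

lemma mon_part_in_mon_ideal:
  "p \<in> polyring n \<Longrightarrow> mon_part (\<lambda>m. \<exists>b\<in>B. mdvd b m) p \<in> mon_ideal n B"
  unfolding mon_ideal_def by (auto simp: polyring_mon_part keys_mon_part)

section \<open>The sum of the variables is a regular element\<close>

definition var_sum :: "nat \<Rightarrow> ('a::field) mpoly" where
  "var_sum n = (\<Sum>k<n. var k)"

lemma var_no_constant: "Poly_Mapping.lookup (var k) 0 = 0"
  by (simp add: var_def mon_def lookup_single when_def poly_mapping_eq_iff fun_eq_iff)

lemma var_sum_max_ideal: "var_sum n \<in> max_ideal n"
proof -
  have "var_sum n \<in> polyring n" unfolding var_sum_def by (intro polyring_sum polyring_var) simp
  then show ?thesis unfolding max_ideal_def var_sum_def by (simp add: lookup_sum var_no_constant)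
qed

lemma lookup_single_mult:
  "Poly_Mapping.lookup (Poly_Mapping.single k c * p) (k + l)
     = (c::'b::comm_semiring_1) * Poly_Mapping.lookup p (l::'k::cancel_comm_monoid_add)"
proof -
  have "Poly_Mapping.lookup (Poly_Mapping.single k c * p) (k + l) =
     (\<Sum>l'. (c when k = l') * (\<Sum>q. Poly_Mapping.lookup p q when k + l = l' + q))"
    by (simp add: lookup_mult lookup_single)
  also have "\<dots> = c * (\<Sum>q. Poly_Mapping.lookup p q when k + l = k + q)"
    by (simp add: when_mult)
  also have "\<dots> = c * Poly_Mapping.lookup p l"
    by (simp add: eq_commute)
  finally show ?thesis .
qed

text \<open>A sufficient condition for the library's (lexicographic) order on exponent vectors.\<close>
lemma lex_less_exp:
  assumes "Poly_Mapping.lookup m i < Poly_Mapping.lookup c i"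
    and "\<And>k. k < i \<Longrightarrow> Poly_Mapping.lookup m k = Poly_Mapping.lookup c k"
  shows "m < (c :: nat \<Rightarrow>\<^sub>0 nat)"
  using assms by transfer (auto simp: less_fun_def)

text \<open>Let m be the lexicographically largest monomial of u and x_i its smallest variable.
  Then m x_i arises in x_k u only for k = i: any other preimage would exceed m.\<close>
lemma lookup_var_mult_at_lead:
  fixes u :: "'a::field mpoly"
  assumes m: "m = Max (Poly_Mapping.keys u)" and i: "i = Min (Poly_Mapping.keys m)" "m \<noteq> 0"
    and k: "k \<noteq> i"
  shows "Poly_Mapping.lookup (var k * u) (m + unit_exp i) = 0"
proof (rule ccontr)
  assume "Poly_Mapping.lookup (var k * u) (m + unit_exp i) \<noteq> 0"
  then obtain c where c: "m + unit_exp i = unit_exp k + c" "c \<in> Poly_Mapping.keys u"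
    using keys_mult[of "var k" u] by (auto simp: in_keys_iff[symmetric] var_def mon_def)
  have coeff: "\<And>j. Poly_Mapping.lookup m j + Poly_Mapping.lookup (unit_exp i) j
      = Poly_Mapping.lookup (unit_exp k) j + Poly_Mapping.lookup c j"
    using c(1) by (metis lookup_add)
  have "k \<in> Poly_Mapping.keys m" using coeff[of k] k by (simp add: lookup_single in_keys_iff)
  then have "i < k" using i k by (simp add: order_neq_le_trans)
  have "m < c"
  proof (rule lex_less_exp[of _ i])
    show "Poly_Mapping.lookup m i < Poly_Mapping.lookup c i" using coeff[of i] k by (simp add: lookup_single)
    show "Poly_Mapping.lookup m j = Poly_Mapping.lookup c j" if "j < i" for j
      using coeff[of j] that \<open>i < k\<close> by (simp add: lookup_single)
  qed
  moreover have "c \<le> m" using c(2) m by simp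
  ultimately show False by simp
qed

lemma lookup_var_sum_mult_at_lead:
  fixes u :: "'a::field mpoly"
  assumes m: "m = Max (Poly_Mapping.keys u)" and i: "i = Min (Poly_Mapping.keys m)" "m \<noteq> 0"
    and "i < n"
  shows "Poly_Mapping.lookup (var_sum n * u) (m + unit_exp i) = Poly_Mapping.lookup u m"
proof -
  have "Poly_Mapping.lookup (var_sum n * u) (m + unit_exp i)
      = (\<Sum>k<n. Poly_Mapping.lookup (var k * u) (m + unit_exp i))"
    unfolding var_sum_def sum_distrib_right lookup_sum ..
  also have "\<dots> = Poly_Mapping.lookup (var i * u) (m + unit_exp i)"
    using \<open>i < n\<close> lookup_var_mult_at_lead[OF m i]
    by (subst sum.remove[of _ i]) (auto intro!: sum.neutral)
  also have "\<dots> = Poly_Mapping.lookup u m"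
    using lookup_single_mult[of "unit_exp i" "1::'a" u m] by (simp add: add.commute var_def mon_def)
  finally show ?thesis .
qed

lemma sqfree_mdvd_add_unit_exp:
  assumes "\<forall>j. Poly_Mapping.lookup b j \<le> 1" "i \<in> Poly_Mapping.keys m" "mdvd b (m + unit_exp i)"
  shows "mdvd b m"
  unfolding mdvd_def
proof
  fix j
  show "Poly_Mapping.lookup b j \<le> Poly_Mapping.lookup m j"
  proof (cases "j = i")
    case True
    then show ?thesis using assms(1,2) by (metis in_keys_iff le_trans less_one not_le)
  next
    case False
    then show ?thesis using assms(3) unfolding mdvd_def by (metis lookup_add lookup_single_not_eq add_0_right)
  qed
qed

lemma var_sum_nonzerodivisor:
  fixes u :: "'a::field mpoly"
  assumes sqfree: "\<forall>b\<in>A. \<forall>j. Poly_Mapping.lookup b j \<le> 1"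
    and u: "u \<in> polyring n" "Poly_Mapping.lookup u 0 = 0"
    and prod: "var_sum n * u \<in> mon_ideal n A"
  shows "u \<in> mon_ideal n A"
proof (rule ccontr)
  assume notin: "u \<notin> mon_ideal n A"
  define in_J where "in_J m \<longleftrightarrow> (\<exists>b\<in>A. mdvd b m)" for m
  define u' where "u' = u - mon_part in_J u"
  have part: "mon_part in_J u \<in> mon_ideal n A"
    using mon_part_in_mon_ideal[OF u(1)] unfolding in_J_def .
  have "u' \<noteq> 0" using notin part unfolding u'_def by (metis eq_iff_diff_eq_0)
  have "var_sum n \<in> polyring n" using var_sum_max_ideal unfolding max_ideal_def by blast
  then have "var_sum n * u' \<in> mon_ideal n A"
    unfolding u'_def right_diff_distrib using mon_ideal_diff[OF prod mon_ideal_mult[OF part]] by blast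
  define m where "m = Max (Poly_Mapping.keys u')"
  have m_key: "m \<in> Poly_Mapping.keys u'" unfolding m_def using \<open>u' \<noteq> 0\<close> by (intro Max_in) auto
  then have "m \<noteq> 0" using u(2) unfolding u'_def keys_mon_part_rest by (auto simp: in_keys_iff)
  define i where "i = Min (Poly_Mapping.keys m)"
  have i_key: "i \<in> Poly_Mapping.keys m" unfolding i_def using \<open>m \<noteq> 0\<close> by (intro Min_in) auto
  have "i < n"
    using i_key m_key u(1) polyring_diff[OF u(1) polyring_mon_part[OF u(1)]]
    unfolding u'_def polyring_def by blast
  have "m + unit_exp i \<in> Poly_Mapping.keys (var_sum n * u')"
    using lookup_var_sum_mult_at_lead[OF m_def i_def \<open>m \<noteq> 0\<close> \<open>i < n\<close>] m_key
    by (simp add: in_keys_iff)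
  then obtain b where b: "b \<in> A" "mdvd b (m + unit_exp i)"
    using \<open>var_sum n * u' \<in> mon_ideal n A\<close> unfolding mon_ideal_def by blast
  then have "in_J m" unfolding in_J_def using sqfree_mdvd_add_unit_exp sqfree i_key by blast
  then show False using m_key unfolding u'_def keys_mon_part_rest by blast
qed

lemma lookup_mult_at_unit_exp:
  fixes f w :: "'a::field mpoly"
  assumes "Poly_Mapping.lookup f 0 = 0" "Poly_Mapping.lookup w 0 = 0"
  shows "Poly_Mapping.lookup (f * w) (unit_exp i) = 0"
proof (rule ccontr)
  assume "Poly_Mapping.lookup (f * w) (unit_exp i) \<noteq> 0"
  then obtain a c where "unit_exp i = a + c" "a \<in> Poly_Mapping.keys f" "c \<in> Poly_Mapping.keys w"
    using keys_mult[of f w] by (auto simp: in_keys_iff[symmetric])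
  moreover have "a \<noteq> 0" "c \<noteq> 0" using calculation assms by (auto simp: in_keys_iff)
  ultimately show False using unit_exp_not_sum by metis
qed

lemma no_linear_generator:
  assumes "sqfree_mon n b" "mdeg b \<ge> 2"
  shows "\<not> mdvd b (unit_exp i)"
proof
  assume dvd: "mdvd b (unit_exp i)"
  have "Poly_Mapping.keys b \<subseteq> {i}"
    using dvd unfolding mdvd_def by (metis in_keys_iff le_zero_eq lookup_single_not_eq subsetI singletonI)
  then have "mdeg b \<le> Poly_Mapping.lookup b i"
    unfolding mdeg_def by (auto dest!: subset_singletonD)
  also have "\<dots> \<le> 1" using assms(1) unfolding sqfree_mon_def by blast
  finally show False using assms(2) by simp
qed

lemma sub_seq_Nil: "z \<in> I \<Longrightarrow> sub_seq I J [] = J"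
  unfolding sub_seq_def by (auto intro!: exI[of _ "\<lambda>_. z"])

lemma sub_seq_single: "sub_seq I J [f] = {j + f * w | j w. j \<in> J \<and> w \<in> I}"
proof
  show "sub_seq I J [f] \<subseteq> {j + f * w | j w. j \<in> J \<and> w \<in> I}"
    unfolding sub_seq_def by force
  show "{j + f * w | j w. j \<in> J \<and> w \<in> I} \<subseteq> sub_seq I J [f]"
    unfolding sub_seq_def by (force intro!: exI[of _ "\<lambda>_. w" for w])
qed

lemma regular_seq_var_sum:
  assumes V: "V \<subseteq> {..<n}" "V \<noteq> {}"
    and A: "\<forall>b\<in>A. sqfree_mon n b \<and> mdeg b \<ge> 2"
  shows "regular_seq n (mon_ideal n (unit_exp ` V)) (mon_ideal n A) [var_sum n :: 'a::field mpoly]"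
    (is "regular_seq n ?I ?J [?f]")
  unfolding regular_seq_def
proof (intro conjI allI impI ballI)
  show "set [?f] \<subseteq> max_ideal n" using var_sum_max_ideal by simp
next
  have "0 \<in> ?I" using mon_ideal_is_ideal unfolding is_ideal_def by blast
  then have J: "sub_seq ?I ?J (take 0 [?f]) = ?J" by (simp add: sub_seq_Nil)
  fix k u assume k: "k < length [?f]" and u: "u \<in> ?I"
    and prod: "[?f] ! k * u \<in> sub_seq ?I ?J (take k [?f])"
  have sqfree: "\<forall>b\<in>A. \<forall>j. Poly_Mapping.lookup b j \<le> 1" using A unfolding sqfree_mon_def by blast
  have "?f * u \<in> ?J" using prod k J by simp
  then have "u \<in> ?J"
    by (rule var_sum_nonzerodivisor[OF sqfree mon_ideal_polyring[OF u] mon_ideal_vars_no_constant[OF u]])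
  then show "u \<in> sub_seq ?I ?J (take k [?f])" using k J by simp
next
  obtain i where i: "i \<in> V" using V by blast
  have "var i \<notin> sub_seq ?I ?J [?f]"
  proof
    assume "var i \<in> sub_seq ?I ?J [?f]"
    then obtain j w where jw: "var i = j + ?f * w" "j \<in> ?J" "w \<in> ?I" unfolding sub_seq_single by blast
    have "Poly_Mapping.lookup j (unit_exp i) = 0"
      using mon_ideal_coeff_var no_linear_generator A jw(2) by blast
    moreover have "Poly_Mapping.lookup (?f * w) (unit_exp i) = 0"
      using lookup_mult_at_unit_exp var_sum_max_ideal mon_ideal_vars_no_constant[OF jw(3)]
      unfolding max_ideal_def by blast
    ultimately have "Poly_Mapping.lookup (j + ?f * w) (unit_exp i) = 0" by (simp add: lookup_add)
    then show False unfolding jw(1)[symmetric] by (simp add: var_def mon_def)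
  qed
  then show "sub_seq ?I ?J [?f] \<noteq> ?I" using var_in_mon_ideal_vars i V by blast
qed

section \<open>Variables cut off by J\<close>

definition cut_by :: "nat \<Rightarrow> (nat \<Rightarrow>\<^sub>0 nat) set \<Rightarrow> nat set \<Rightarrow> bool" where
  "cut_by n A C \<longleftrightarrow> (\<forall>i\<in>C. \<forall>k<n. k \<notin> C \<longrightarrow> (\<exists>b\<in>A. mdvd b (unit_exp i + unit_exp k)))"

lemma mult_across_cut:
  assumes p: "p \<in> polyring n" and q: "q \<in> polyring n"
    and p_meets: "\<forall>m\<in>Poly_Mapping.keys p. Poly_Mapping.keys m \<inter> C \<noteq> {}"
    and q_leaves: "\<forall>m\<in>Poly_Mapping.keys q. \<not> Poly_Mapping.keys m \<subseteq> C"
    and cut: "cut_by n A C"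
  shows "p * q \<in> mon_ideal n A"
proof -
  have "\<exists>b\<in>A. mdvd b m" if m: "m \<in> Poly_Mapping.keys (p * q)" for m
  proof -
    obtain a c where mac: "m = a + c" "a \<in> Poly_Mapping.keys p" "c \<in> Poly_Mapping.keys q"
      using keys_mult[of p q] m by blast
    obtain i where i: "i \<in> Poly_Mapping.keys a" "i \<in> C" using p_meets mac by blast
    obtain k where k: "k \<in> Poly_Mapping.keys c" "k \<notin> C" using q_leaves mac by blast
    have "k < n" using q mac k unfolding polyring_def by blast
    then obtain b where "b \<in> A" "mdvd b (unit_exp i + unit_exp k)"
      using cut i k unfolding cut_by_def by blast
    moreover have "mdvd (unit_exp i + unit_exp k) m" unfolding mac(1) using i k by (intro mdvd_edge) auto
    ultimately show ?thesis using mdvd_trans by blast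
  qed
  then show ?thesis unfolding mon_ideal_def using polyring_mult[OF p q] by blast
qed

abbreviation supported_part :: "nat set \<Rightarrow> ('a::field) mpoly \<Rightarrow> 'a mpoly" where
  "supported_part C p \<equiv> mon_part (\<lambda>m. Poly_Mapping.keys m \<subseteq> C) p"

lemma supported_part_meets:
  assumes "p \<in> max_ideal n"
  shows "\<forall>m\<in>Poly_Mapping.keys (supported_part C p). Poly_Mapping.keys m \<inter> C \<noteq> {}"
proof
  fix m assume "m \<in> Poly_Mapping.keys (supported_part C p)"
  then have m_p: "m \<in> Poly_Mapping.keys p" and m_C: "Poly_Mapping.keys m \<subseteq> C"
    by (simp_all add: keys_mon_part)
  have "m \<noteq> 0" using m_p assms unfolding max_ideal_def by (auto simp: in_keys_iff)
  then have "Poly_Mapping.keys m \<noteq> {}" by simp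
  then show "Poly_Mapping.keys m \<inter> C \<noteq> {}" using m_C by blast
qed

lemma supported_part_in_vars_ideal:
  assumes "p \<in> max_ideal n" "C \<subseteq> V"
  shows "supported_part C p \<in> mon_ideal n (unit_exp ` V)"
proof -
  have "p \<in> polyring n" using assms(1) unfolding max_ideal_def by blast
  moreover have "\<forall>m\<in>Poly_Mapping.keys (supported_part C p). Poly_Mapping.keys m \<inter> V \<noteq> {}"
    using supported_part_meets[OF assms(1)] assms(2) by blast
  ultimately show ?thesis unfolding mon_ideal_vars_iff using polyring_mon_part by blast
qed

text \<open>For f1, f2 in the maximal ideal and u the C-supported part of f1, we have f2 u in J + f1 I:
  writing f1 = u + a and f2 = v + b, f2 u - f1 v = u b - v a is a sum of products across the cut.\<close>
lemma cut_part_annihilated: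
  fixes f1 f2 :: "'a::field mpoly"
  assumes C: "C \<subseteq> V" and cut: "cut_by n A C"
    and f: "f1 \<in> max_ideal n" "f2 \<in> max_ideal n"
  shows "f2 * supported_part C f1 \<in> sub_seq (mon_ideal n (unit_exp ` V)) (mon_ideal n A) [f1]"
proof -
  define u where "u = supported_part C f1"
  define v where "v = supported_part C f2"
  have f_poly: "f1 \<in> polyring n" "f2 \<in> polyring n" using f unfolding max_ideal_def by auto
  have u_poly: "u \<in> polyring n" unfolding u_def by (rule polyring_mon_part[OF f_poly(1)])
  have v_poly: "v \<in> polyring n" unfolding v_def by (rule polyring_mon_part[OF f_poly(2)])
  have v_I: "v \<in> mon_ideal n (unit_exp ` V)" unfolding v_def by (rule supported_part_in_vars_ideal[OF f(2) C])
  have u_meets: "\<forall>m\<in>Poly_Mapping.keys u. Poly_Mapping.keys m \<inter> C \<noteq> {}"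
    unfolding u_def by (rule supported_part_meets[OF f(1)])
  have v_meets: "\<forall>m\<in>Poly_Mapping.keys v. Poly_Mapping.keys m \<inter> C \<noteq> {}"
    unfolding v_def by (rule supported_part_meets[OF f(2)])
  have rest_leaves: "\<forall>m\<in>Poly_Mapping.keys (f1 - u). \<not> Poly_Mapping.keys m \<subseteq> C"
    "\<forall>m\<in>Poly_Mapping.keys (f2 - v). \<not> Poly_Mapping.keys m \<subseteq> C"
    unfolding u_def v_def by (simp_all add: keys_mon_part_rest)
  have "u * (f2 - v) \<in> mon_ideal n A"
    by (rule mult_across_cut[OF u_poly polyring_diff[OF f_poly(2) v_poly] u_meets rest_leaves(2) cut])
  moreover have "v * (f1 - u) \<in> mon_ideal n A"
    by (rule mult_across_cut[OF v_poly polyring_diff[OF f_poly(1) u_poly] v_meets rest_leaves(1) cut])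
  moreover have "f2 * u - f1 * v = u * (f2 - v) - v * (f1 - u)" by (simp add: algebra_simps)
  ultimately have "f2 * u - f1 * v \<in> mon_ideal n A" using mon_ideal_diff by metis
  moreover have "f2 * u = (f2 * u - f1 * v) + f1 * v" by simp
  ultimately have "f2 * u \<in> sub_seq (mon_ideal n (unit_exp ` V)) (mon_ideal n A) [f1]"
    unfolding sub_seq_single using v_I by blast
  then show ?thesis unfolding u_def .
qed

text \<open>If f1 is regular on I/J, the C-supported part u of f1 is not in J + f1 I. Otherwise
  u = j + f1 w; multiplying by x_i for i in C gives f1 (x_i - x_i w) in J, so x_i - x_i w lies
  in J by regularity, whereas it contains the variable x_i, which J does not.\<close>
lemma cut_part_not_in:
  fixes f1 :: "'a::field mpoly"
  assumes no_linear: "\<forall>b\<in>A. \<forall>i. \<not> mdvd b (unit_exp i)"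
    and C: "C \<noteq> {}" "C \<subseteq> V" "V \<subseteq> {..<n}" and cut: "cut_by n A C"
    and f1: "f1 \<in> max_ideal n"
    and regular: "\<forall>u\<in>mon_ideal n (unit_exp ` V). f1 * u \<in> mon_ideal n A \<longrightarrow> u \<in> mon_ideal n A"
  shows "supported_part C f1 \<notin> sub_seq (mon_ideal n (unit_exp ` V)) (mon_ideal n A) [f1]"
proof
  define I where "I = (mon_ideal n (unit_exp ` V) :: 'a mpoly set)"
  define J where "J = (mon_ideal n A :: 'a mpoly set)"
  define u where "u = supported_part C f1"
  assume "supported_part C f1 \<in> sub_seq (mon_ideal n (unit_exp ` V)) (mon_ideal n A) [f1]"
  then obtain j w where jw: "u = j + f1 * w" "j \<in> J" "w \<in> I"
    unfolding sub_seq_single u_def I_def J_def by blast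
  obtain i where i: "i \<in> C" using C(1) by blast
  then have "i < n" using C by blast
  define X where "X = (var i :: 'a mpoly)"
  have f1_poly: "f1 \<in> polyring n" using f1 unfolding max_ideal_def by blast
  have X_poly: "X \<in> polyring n" unfolding X_def using \<open>i < n\<close> by (rule polyring_var)
  have X_I: "X \<in> I" unfolding X_def I_def using var_in_mon_ideal_vars i C \<open>i < n\<close> by blast
  have w_poly: "w \<in> polyring n" using jw(3) unfolding I_def by (rule mon_ideal_polyring)
  have u_poly: "u \<in> polyring n" unfolding u_def by (rule polyring_mon_part[OF f1_poly])
  have X_meets: "\<forall>m\<in>Poly_Mapping.keys X. Poly_Mapping.keys m \<inter> C \<noteq> {}"
    using i by (simp add: X_def var_def mon_def)
  have rest_leaves: "\<forall>m\<in>Poly_Mapping.keys (f1 - u). \<not> Poly_Mapping.keys m \<subseteq> C"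
    unfolding u_def by (simp add: keys_mon_part_rest)
  have "X * (f1 - u) \<in> J" unfolding J_def
    by (rule mult_across_cut[OF X_poly polyring_diff[OF f1_poly u_poly] X_meets rest_leaves cut])
  moreover have "X * j \<in> J" using mon_ideal_mult jw(2) X_poly unfolding J_def by blast
  moreover have "f1 * (X - X * w) = X * (f1 - u) + X * j"
    using jw(1) by (simp add: algebra_simps)
  ultimately have "f1 * (X - X * w) \<in> J" using mon_ideal_add unfolding J_def by metis
  moreover have "X - X * w \<in> I"
    using mon_ideal_diff[OF X_I[unfolded I_def] mon_ideal_mult[OF X_I[unfolded I_def] w_poly]]
    unfolding I_def by (simp add: mult.commute)
  ultimately have in_J: "X - X * w \<in> J" using regular unfolding I_def J_def by blast
  have "Poly_Mapping.lookup (X * w) (unit_exp i) = 0"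
    unfolding X_def
    by (rule lookup_mult_at_unit_exp[OF var_no_constant mon_ideal_vars_no_constant[OF jw(3)[unfolded I_def]]])
  then have "Poly_Mapping.lookup (X - X * w) (unit_exp i) = 1"
    by (simp add: lookup_minus X_def var_def mon_def)
  moreover have "Poly_Mapping.lookup (X - X * w) (unit_exp i) = 0"
    using mon_ideal_coeff_var no_linear in_J unfolding J_def by blast
  ultimately show False by simp
qed

lemma regular_seq_length_le_1:
  assumes no_linear: "\<forall>b\<in>A. \<forall>i. \<not> mdvd b (unit_exp i)"
    and C: "C \<noteq> {}" "C \<subseteq> V" "V \<subseteq> {..<n}" and cut: "cut_by n A C"
    and reg: "regular_seq n (mon_ideal n (unit_exp ` V)) (mon_ideal n A) (fs :: 'a::field mpoly list)"
  shows "length fs \<le> 1"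
proof (rule ccontr)
  define I where "I = (mon_ideal n (unit_exp ` V) :: 'a mpoly set)"
  define J where "J = (mon_ideal n A :: 'a mpoly set)"
  assume "\<not> length fs \<le> 1"
  then obtain f1 f2 rest where fs: "fs = f1 # f2 # rest" by (cases fs rule: remdups_adj.cases) auto
  have f: "f1 \<in> max_ideal n" "f2 \<in> max_ideal n" using reg unfolding regular_seq_def fs by auto
  have step: "\<forall>u\<in>I. fs ! k * u \<in> sub_seq I J (take k fs) \<longrightarrow> u \<in> sub_seq I J (take k fs)"
    if "k < length fs" for k
    using reg that unfolding regular_seq_def I_def J_def by blast
  have "0 \<in> I" using mon_ideal_is_ideal unfolding I_def is_ideal_def by blast
  then have "\<forall>u\<in>I. f1 * u \<in> J \<longrightarrow> u \<in> J" using step[of 0] sub_seq_Nil[of 0 I J] by (simp add: fs)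
  then have "supported_part C f1 \<notin> sub_seq I J [f1]"
    using cut_part_not_in[OF no_linear C cut f(1)] unfolding I_def J_def by blast
  moreover have "supported_part C f1 \<in> I"
    using supported_part_in_vars_ideal[OF f(1) C(2)] unfolding I_def .
  moreover have "f2 * supported_part C f1 \<in> sub_seq I J [f1]"
    using cut_part_annihilated[OF C(2) cut f] unfolding I_def J_def .
  ultimately show False using step[of 1] by (simp add: fs)
qed

section \<open>Finding a cut from the counting hypothesis\<close>

text \<open>A Hall-type counting bound: if every nonempty W \<subseteq> V has an element i with a private
  witness e in P, i.e. one whose support meets W exactly in i, then |V| \<le> |P|. Removing i
  from W loses at least the witness e from the set of elements of P meeting W.\<close>
lemma card_le_by_private_witnesses:
  fixes P :: "'b set" and supp :: "'b \<Rightarrow> 'c set"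
  assumes fin: "finite P" "finite V"
    and witness: "\<And>W. W \<subseteq> V \<Longrightarrow> W \<noteq> {} \<Longrightarrow> \<exists>i\<in>W. \<exists>e\<in>P. supp e \<inter> W = {i}"
  shows "card V \<le> card P"
proof -
  have "card V \<le> card {e\<in>P. supp e \<inter> V \<noteq> {}}"
    using fin(2)
  proof (induction V rule: finite_remove_induct)
    case empty then show ?case by simp
  next
    case (remove W)
    obtain i e where i: "i \<in> W" and e: "e \<in> P" "supp e \<inter> W = {i}"
      using witness[OF remove(3) remove(2)] by blast
    define meets where "meets X = {e\<in>P. supp e \<inter> X \<noteq> {}}" for X
    have fin_meets: "finite (meets W)" unfolding meets_def using fin(1) by simp
    have e_meets: "e \<in> meets W" unfolding meets_def using e by auto
    have "meets (W - {i}) \<subseteq> meets W - {e}" unfolding meets_def using e by auto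
    then have "card (meets (W - {i})) \<le> card (meets W - {e})"
      using fin_meets by (intro card_mono) auto
    also have "\<dots> = card (meets W) - 1" using e_meets by (rule card_Diff_singleton)
    finally have "card (meets (W - {i})) \<le> card (meets W) - 1" .
    moreover have "card (meets W) > 0" using fin_meets e_meets card_gt_0_iff by blast
    moreover have "card W = card (W - {i}) + 1"
      using card_Suc_Diff1[OF remove(1) i] by simp
    ultimately show ?case using remove.IH[OF i] unfolding meets_def by linarith
  qed
  also have "\<dots> \<le> card P" using fin(1) by (intro card_mono) auto
  finally show ?thesis .
qed

text \<open>There are only finitely many square free monomials in n variables, so rho counts a finite set.\<close>
lemma finite_sqfree_mons: "finite {a. sqfree_mon n a}"
proof (rule inj_on_finite[of Poly_Mapping.keys _ "Pow {..<n}"])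
  show "inj_on Poly_Mapping.keys {a. sqfree_mon n a}"
  proof
    fix a b assume a: "a \<in> {a. sqfree_mon n a}" and b: "b \<in> {a. sqfree_mon n a}"
      and same_keys: "Poly_Mapping.keys a = Poly_Mapping.keys b"
    show "a = b"
    proof (rule poly_mapping_eqI)
      fix j
      have "Poly_Mapping.lookup a j \<le> 1" "Poly_Mapping.lookup b j \<le> 1"
        using a b unfolding sqfree_mon_def by auto
      moreover have "Poly_Mapping.lookup a j = 0 \<longleftrightarrow> Poly_Mapping.lookup b j = 0"
        using same_keys by (metis in_keys_iff)
      ultimately show "Poly_Mapping.lookup a j = Poly_Mapping.lookup b j" by linarith
    qed
  qed
  show "Poly_Mapping.keys ` {a. sqfree_mon n a} \<subseteq> Pow {..<n}"
    unfolding sqfree_mon_def by auto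
qed auto

lemma edge_mon:
  assumes "i \<noteq> k" "i < n" "k < n"
  shows "Poly_Mapping.keys (unit_exp i + unit_exp k) = {i, k}"
    and "sqfree_mon n (unit_exp i + unit_exp k)"
    and "mdeg (unit_exp i + unit_exp k) = 2"
proof -
  show keys: "Poly_Mapping.keys (unit_exp i + unit_exp k) = {i, k}"
    by (simp add: keys_add_exp insert_commute)
  then show "sqfree_mon n (unit_exp i + unit_exp k)"
    unfolding sqfree_mon_def using assms by (auto simp: lookup_add lookup_single when_def)
  show "mdeg (unit_exp i + unit_exp k) = 2"
    unfolding mdeg_def keys using assms(1) by (simp add: lookup_add lookup_single when_def)
qed

text \<open>If r > s, some nonempty set of variables of V is cut off by J. Otherwise every nonempty
  W \<subseteq> V has i in W and k outside W with x_i x_k in I but not in J, a degree-2 monomial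
  meeting W only in i, and counting these gives r \<le> s.\<close>
lemma exists_cut:
  fixes I J :: "('a::field) mpoly set"
  assumes V: "V \<subseteq> {..<n}"
    and I: "I = mon_ideal n (unit_exp ` V)" and J: "J = mon_ideal n A" and "J \<subseteq> I"
    and less: "rho n 2 I - rho n 2 J < card V"
  shows "\<exists>C. C \<noteq> {} \<and> C \<subseteq> V \<and> cut_by n A C"
proof (rule ccontr)
  assume no_cut: "\<not> ?thesis"
  define deg2 where "deg2 L = {a. sqfree_mon n a \<and> mdeg a = 2 \<and> mon a \<in> L}" for L :: "'a mpoly set"
  have fin: "finite (deg2 I)" unfolding deg2_def by (rule finite_subset[OF _ finite_sqfree_mons]) auto
  have sub: "deg2 J \<subseteq> deg2 I" unfolding deg2_def using \<open>J \<subseteq> I\<close> by auto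
  have "card V \<le> card (deg2 I - deg2 J)"
  proof (rule card_le_by_private_witnesses[where supp = Poly_Mapping.keys])
    show "finite (deg2 I - deg2 J)" "finite V" using fin V finite_subset by auto
    fix W assume W: "W \<subseteq> V" "W \<noteq> {}"
    then obtain i k where ik: "i \<in> W" "k < n" "k \<notin> W" "\<not> (\<exists>b\<in>A. mdvd b (unit_exp i + unit_exp k))"
      using no_cut unfolding cut_by_def by blast
    have "i \<noteq> k" "i < n" using ik W V by auto
    note e = edge_mon[OF this ik(2)]
    have "mon (unit_exp i + unit_exp k) \<in> (polyring n :: 'a mpoly set)"
      unfolding mon_def using e(1) \<open>i < n\<close> ik(2) by (intro polyring_single) auto
    then have "mon (unit_exp i + unit_exp k) \<in> I"
      unfolding I mon_ideal_vars_iff using e(1) ik(1) W by (auto simp: mon_def)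
    moreover have "mon (unit_exp i + unit_exp k) \<notin> J"
      unfolding J mon_ideal_def using ik(4) by (auto simp: mon_def)
    ultimately have "unit_exp i + unit_exp k \<in> deg2 I - deg2 J" unfolding deg2_def using e by auto
    moreover have "Poly_Mapping.keys (unit_exp i + unit_exp k) \<inter> W = {i}" using e(1) ik by auto
    ultimately show "\<exists>i\<in>W. \<exists>e\<in>deg2 I - deg2 J. Poly_Mapping.keys e \<inter> W = {i}" using ik(1) by blast
  qed
  also have "\<dots> = rho n 2 I - rho n 2 J"
    using card_Diff_subset[OF finite_subset[OF sub fin] sub] unfolding rho_def deg2_def by simp
  finally show False using less by simp
qed

theorem proposition1p14:
  fixes n r :: nat and I J :: "('a::field) mpoly set" and V :: "nat set" and A :: "(nat \<Rightarrow>\<^sub>0 nat) set"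
  assumes "V \<subseteq> {..<n}" and "card V = r" and "r > 0"
    and "I = ideal_gen n (var ` V)"
    and "\<forall>a\<in>A. sqfree_mon n a \<and> mdeg a \<ge> 2"
    and "J = ideal_gen n (mon ` A)"
    and "J \<noteq> {0}" and "J \<subset> I"
    and "r > rho n 2 I - rho n 2 J"
  shows "depth_quot n I J = 1"
proof -
  have "(var ` V :: 'a mpoly set) = mon ` unit_exp ` V" by (auto simp: var_def)
  moreover have "ideal_gen n (mon ` unit_exp ` V) = (mon_ideal n (unit_exp ` V) :: 'a mpoly set)"
    using assms(1) by (intro ideal_gen_mon) auto
  ultimately have I: "I = mon_ideal n (unit_exp ` V)" using assms(4) by (simp only:)
  have J: "J = mon_ideal n A"
    using assms(5,6) ideal_gen_mon[of A n] unfolding sqfree_mon_def by auto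
  have "V \<noteq> {}" using assms(2,3) by auto
  have no_linear: "\<forall>b\<in>A. \<forall>i. \<not> mdvd b (unit_exp i)" using assms(5) no_linear_generator by blast
  obtain C where C: "C \<noteq> {}" "C \<subseteq> V" "cut_by n A C"
    using exists_cut[OF assms(1) I J] assms(2,8,9) by blast
  have "regular_seq n I J [var_sum n]"
    unfolding I J by (rule regular_seq_var_sum[OF assms(1) \<open>V \<noteq> {}\<close> assms(5)])
  moreover have "length fs \<le> 1" if "regular_seq n I J fs" for fs
    using regular_seq_length_le_1[OF no_linear C(1,2) assms(1) C(3)] that unfolding I J by blast
  ultimately show ?thesis
    unfolding depth_quot_def by (intro Greatest_equality) (auto intro: exI[of _ "[var_sum n]"])
qed

end
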